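(* For any VSCC $F$, the following are equivalent: (1) $F$ satisfies Pure IIA; (2) $F$ is defeat-rationalized by some VCCR satisfying IIA.
   Context: Profiles: $\mathbf P:V\to\mathcal L(X)$, $V$ nonempty finite set of voters, $X=X(\mathbf P)$ nonempty finite set of candidates (from fixed infinite sets), $\mathcal L(X)$ strict linear orders; $\mathbf P_{|Y}$ is the profile with each ballot restricted to $Y$. A VCCR is a function $f$ assigning to each profile an asymmetric relation $f(\mathbf P)$ on $X(\mathbf P)$ ($x$ defeats $y$ iff $(x,y)\in f(\mathbf P)$). A VSCC is a function $F$ with $\varnothing\ne F(\mathbf P)\subseteq X(\mathbf P)$ for every profile. $F$ is defeat-rationalized by $f$ if for every profile $\mathbf P$, $F(\mathbf P)=\{x\in X(\mathbf P): \text{no } y\in X(\mathbf P) \text{ with } (y,x)\in f(\mathbf P)\}$. A VCCR $f$ satisfies IIA if whenever $(x,y)\in f(\mathbf P)$ and $\mathbf P_{|\{x,y\}}=\mathbf P'_{|\{x,y\}}$, then $(x,y)\in f(\mathbf P')$. A VSCC $F$ satisfies Pure IIA if for every profile $\mathbf P$ and $y\in X(\mathbf P)$ with $y\notin F(\mathbf P)$ there is $x\in X(\mathbf P)$ such that $y\notin F(\mathbf P')$ for every profile $\mathbf P'$ with $\mathbf P_{|\{x,y\}}=\mathbf P'_{|\{x,y\}}$. *)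

theory Defs
  imports Main
begin

text \<open>A profile is a triple (V, X, P): voters V, candidates X, and for each voter
  a ballot (strict linear order on X, as a relation; (a,b) in P i means voter i ranks a above b).
  Outside V the ballot is fixed to the empty relation so that profiles are canonical.\<close>

type_synonym ('v, 'c) profile = "'v set \<times> 'c set \<times> ('v \<Rightarrow> ('c \<times> 'c) set)"

definition voters :: "('v, 'c) profile \<Rightarrow> 'v set" where
  "voters Pr = fst Pr"

definition cands :: "('v, 'c) profile \<Rightarrow> 'c set" where
  "cands Pr = fst (snd Pr)"

definition ballot :: "('v, 'c) profile \<Rightarrow> 'v \<Rightarrow> ('c \<times> 'c) set" where
  "ballot Pr = snd (snd Pr)"

definition strict_lin_order :: "'c set \<Rightarrow> ('c \<times> 'c) set \<Rightarrow> bool" where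
  "strict_lin_order X R \<longleftrightarrow> R \<subseteq> X \<times> X \<and> irrefl R \<and> trans R \<and> total_on X R"

definition is_profile :: "('v, 'c) profile \<Rightarrow> bool" where
  "is_profile Pr \<longleftrightarrow>
     finite (voters Pr) \<and> voters Pr \<noteq> {} \<and> finite (cands Pr) \<and> cands Pr \<noteq> {} \<and>
     (\<forall>i \<in> voters Pr. strict_lin_order (cands Pr) (ballot Pr i)) \<and>
     (\<forall>i. i \<notin> voters Pr \<longrightarrow> ballot Pr i = {})"

definition restrict_prof :: "('v, 'c) profile \<Rightarrow> 'c set \<Rightarrow> ('v, 'c) profile" where
  "restrict_prof Pr Y = (voters Pr, cands Pr \<inter> Y, \<lambda>i. ballot Pr i \<inter> (Y \<times> Y))"

definition is_VCCR :: "(('v, 'c) profile \<Rightarrow> ('c \<times> 'c) set) \<Rightarrow> bool" where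
  "is_VCCR f \<longleftrightarrow> (\<forall>Pr. is_profile Pr \<longrightarrow>
     f Pr \<subseteq> cands Pr \<times> cands Pr \<and> (\<forall>x y. (x, y) \<in> f Pr \<longrightarrow> (y, x) \<notin> f Pr))"

definition is_VSCC :: "(('v, 'c) profile \<Rightarrow> 'c set) \<Rightarrow> bool" where
  "is_VSCC F \<longleftrightarrow> (\<forall>Pr. is_profile Pr \<longrightarrow> F Pr \<noteq> {} \<and> F Pr \<subseteq> cands Pr)"

definition defeat_rationalized :: "(('v, 'c) profile \<Rightarrow> 'c set) \<Rightarrow> (('v, 'c) profile \<Rightarrow> ('c \<times> 'c) set) \<Rightarrow> bool" where
  "defeat_rationalized F f \<longleftrightarrow> (\<forall>Pr. is_profile Pr \<longrightarrow>
     F Pr = {x \<in> cands Pr. \<not> (\<exists>y \<in> cands Pr. (y, x) \<in> f Pr)})"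

definition VCCR_IIA :: "(('v, 'c) profile \<Rightarrow> ('c \<times> 'c) set) \<Rightarrow> bool" where
  "VCCR_IIA f \<longleftrightarrow> (\<forall>Pr Pr' x y. is_profile Pr \<and> is_profile Pr' \<and> (x, y) \<in> f Pr \<and>
     restrict_prof Pr {x, y} = restrict_prof Pr' {x, y} \<longrightarrow> (x, y) \<in> f Pr')"

definition pure_IIA :: "(('v, 'c) profile \<Rightarrow> 'c set) \<Rightarrow> bool" where
  "pure_IIA F \<longleftrightarrow> (\<forall>Pr y. is_profile Pr \<and> y \<in> cands Pr \<and> y \<notin> F Pr \<longrightarrow>
     (\<exists>x \<in> cands Pr. \<forall>Pr'. is_profile Pr' \<and> restrict_prof Pr {x, y} = restrict_prof Pr' {x, y}
        \<longrightarrow> y \<notin> F Pr'))"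

end

theory Submission
  imports Defs
begin

text \<open>Pure IIA says that every loser y has a witness x such that y loses in every profile
  agreeing with the given one on {x, y}. Declaring exactly these pairs (x, y) to be defeats
  yields a relation that satisfies IIA by construction and rationalizes F; it is asymmetric
  because in the two-candidate profile on {x, y} the choice set of F must contain x or y.
  Conversely, a defeat of y by x that only depends on {x, y} is such a witness.\<close>

definition iia_defeat :: "(('v, 'c) profile \<Rightarrow> 'c set) \<Rightarrow> ('v, 'c) profile \<Rightarrow> ('c \<times> 'c) set" where
  "iia_defeat F Pr = {(x, y). x \<in> cands Pr \<and> y \<in> cands Pr \<and>
     (\<forall>Pr'. is_profile Pr' \<and> restrict_prof Pr {x, y} = restrict_prof Pr' {x, y} \<longrightarrow> y \<notin> F Pr')}"

lemma restrict_prof_idem [simp]: "restrict_prof (restrict_prof Pr Y) Y = restrict_prof Pr Y"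
  unfolding restrict_prof_def voters_def cands_def ballot_def by auto

lemma cands_restrict_prof: "cands (restrict_prof Pr Y) = cands Pr \<inter> Y"
  unfolding restrict_prof_def cands_def by simp

lemma cands_eq_if_restrict_prof_eq:
  "restrict_prof Pr Y = restrict_prof Pr' Y \<Longrightarrow> cands Pr \<inter> Y = cands Pr' \<inter> Y"
  by (metis cands_restrict_prof)

lemma strict_lin_order_Int:
  "strict_lin_order X R \<Longrightarrow> strict_lin_order (X \<inter> Y) (R \<inter> (Y \<times> Y))"
  unfolding strict_lin_order_def irrefl_def trans_def total_on_def by blast

lemma is_profile_restrict_prof:
  assumes "is_profile Pr" "cands Pr \<inter> Y \<noteq> {}"
  shows "is_profile (restrict_prof Pr Y)"
  using assms strict_lin_order_Int
  unfolding is_profile_def restrict_prof_def voters_def cands_def ballot_def by auto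

lemma iia_defeat_asym:
  assumes "is_VSCC F" "is_profile Pr" "(x, y) \<in> iia_defeat F Pr"
  shows "(y, x) \<notin> iia_defeat F Pr"
proof
  assume yx: "(y, x) \<in> iia_defeat F Pr"
  define Pxy where "Pxy = restrict_prof Pr {x, y}"
  have "x \<in> cands Pr" using assms(3) unfolding iia_defeat_def by blast
  then have "is_profile Pxy"
    unfolding Pxy_def by (intro is_profile_restrict_prof[OF assms(2)]) blast
  moreover have "restrict_prof Pr {x, y} = restrict_prof Pxy {x, y}"
    "restrict_prof Pr {y, x} = restrict_prof Pxy {y, x}"
    unfolding Pxy_def by (simp_all add: insert_commute)
  ultimately have "y \<notin> F Pxy" "x \<notin> F Pxy"
    using assms(3) yx unfolding iia_defeat_def by blast+
  moreover have "F Pxy \<noteq> {}" "F Pxy \<subseteq> cands Pxy"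
    using assms(1) \<open>is_profile Pxy\<close> unfolding is_VSCC_def by blast+
  moreover have "cands Pxy \<subseteq> {x, y}"
    unfolding Pxy_def cands_restrict_prof by blast
  ultimately show False by blast
qed

lemma iia_defeat_subset: "iia_defeat F Pr \<subseteq> cands Pr \<times> cands Pr"
  unfolding iia_defeat_def by blast

lemma is_VCCR_iia_defeat: "is_VSCC F \<Longrightarrow> is_VCCR (iia_defeat F)"
  unfolding is_VCCR_def by (metis iia_defeat_subset iia_defeat_asym)

lemma VCCR_IIA_iia_defeat: "VCCR_IIA (iia_defeat F)"
  unfolding VCCR_IIA_def iia_defeat_def
  by (auto dest: cands_eq_if_restrict_prof_eq)

lemma defeat_rationalized_iia_defeat:
  assumes "is_VSCC F" "pure_IIA F"
  shows "defeat_rationalized F (iia_defeat F)"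
  unfolding defeat_rationalized_def
proof (intro allI impI)
  fix Pr :: "('a, 'b) profile"
  assume Pr: "is_profile Pr"
  have "x \<notin> F Pr" if "(y, x) \<in> iia_defeat F Pr" for x y
    using that Pr unfolding iia_defeat_def by blast
  moreover have "\<exists>y \<in> cands Pr. (y, x) \<in> iia_defeat F Pr"
    if "x \<in> cands Pr" "x \<notin> F Pr" for x
    using assms(2) Pr that unfolding pure_IIA_def iia_defeat_def by blast
  moreover have "F Pr \<subseteq> cands Pr"
    using assms(1) Pr unfolding is_VSCC_def by blast
  ultimately show "F Pr = {x \<in> cands Pr. \<not> (\<exists>y \<in> cands Pr. (y, x) \<in> iia_defeat F Pr)}"
    by blast
qed

lemma pure_IIA_if_defeat_rationalized:
  assumes "VCCR_IIA f" "defeat_rationalized F f"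
  shows "pure_IIA F"
  unfolding pure_IIA_def
proof (intro allI impI)
  fix Pr y
  assume Pr: "is_profile Pr \<and> y \<in> cands Pr \<and> y \<notin> F Pr"
  then obtain x where x: "x \<in> cands Pr" "(x, y) \<in> f Pr"
    using assms(2) unfolding defeat_rationalized_def by blast
  have "y \<notin> F Pr'"
    if "is_profile Pr'" "restrict_prof Pr {x, y} = restrict_prof Pr' {x, y}" for Pr'
  proof -
    have "(x, y) \<in> f Pr'"
      using assms(1) Pr x that unfolding VCCR_IIA_def by blast
    moreover have "x \<in> cands Pr'"
      using cands_eq_if_restrict_prof_eq[OF that(2)] x(1) by blast
    ultimately show ?thesis
      using assms(2) that(1) unfolding defeat_rationalized_def by blast
  qed
  with x(1) show "\<exists>x \<in> cands Pr. \<forall>Pr'. is_profile Pr' \<and>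
      restrict_prof Pr {x, y} = restrict_prof Pr' {x, y} \<longrightarrow> y \<notin> F Pr'"
    by blast
qed

theorem proposition5p4:
  fixes F :: "('v, 'c) profile \<Rightarrow> 'c set"
  assumes "infinite (UNIV :: 'v set)" and "infinite (UNIV :: 'c set)"
  assumes "is_VSCC F"
  shows "pure_IIA F \<longleftrightarrow> (\<exists>f. is_VCCR f \<and> VCCR_IIA f \<and> defeat_rationalized F f)"
proof
  assume "pure_IIA F"
  then show "\<exists>f. is_VCCR f \<and> VCCR_IIA f \<and> defeat_rationalized F f"
    using assms(3) is_VCCR_iia_defeat VCCR_IIA_iia_defeat defeat_rationalized_iia_defeat
    by blast
next
  assume "\<exists>f. is_VCCR f \<and> VCCR_IIA f \<and> defeat_rationalized F f"
  then show "pure_IIA F" using pure_IIA_if_defeat_rationalized by blast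
qed

end
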